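(* Let $X$ be a compact metric space with metric $d$, let $f:X\to X$ be continuous, and let $\delta>0$. If $C\subset X$ is a countable Li-Yorke chaotic set (resp. Li-Yorke $\delta$-chaotic set), then there exists a strictly increasing sequence $Q$ of positive integers such that $C$ is a distributional chaotic set in the sequence $Q$ (resp. a distributional $\delta$-chaotic set in the sequence $Q$).
   Context: Let $\Delta=\{(x,x):x\in X\}$. A pair $(x,y)$ is a Li-Yorke scrambled pair if $\liminf_{n\to\infty}d(f^n x,f^n y)=0$ and $\limsup_{n\to\infty}d(f^nx,f^ny)>0$; it is a Li-Yorke $\delta$-scrambled pair if $\liminf_{n\to\infty}d(f^n x,f^n y)=0$ and $\limsup_{n\to\infty}d(f^nx,f^ny)>\delta$. A set $C$ is Li-Yorke chaotic (resp. Li-Yorke $\delta$-chaotic) if every $(x,y)\in C\times C\setminus\Delta$ is a Li-Yorke scrambled pair (resp. Li-Yorke $\delta$-scrambled pair). For a strictly increasing sequence $Q=\{m_i\}$ of positive integers, $x,y\in X$, $t>0$, $n\ge 1$, put $\Phi^n_{(xy,Q)}(t)=\frac1n\#\{1\le i\le n: d(f^{m_i}(x),f^{m_i}(y))\le t\}$, $\Phi_{(xy,Q)}(t)=\liminf_{n}\Phi^n_{(xy,Q)}(t)$, $\Phi^\star_{(xy,Q)}(t)=\limsup_n\Phi^n_{(xy,Q)}(t)$. A pair $(x,y)$ is a distributional scrambled pair in $Q$ if $\Phi^\star_{(xy,Q)}(t)=1$ for all $t>0$ and $\Phi_{(xy,Q)}(s)=0$ for some $s>0$; it is a distributional $\delta$-scrambled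 pair in $Q$ if $\Phi^\star_{(xy,Q)}(t)=1$ for all $t>0$ and $\Phi_{(xy,Q)}(\delta)=0$. A set $D$ is a distributional chaotic set (resp. distributional $\delta$-chaotic set) in $Q$ if every $(x,y)\in D\times D\setminus\Delta$ is a distributional scrambled pair (resp. distributional $\delta$-scrambled pair) in $Q$. *)

theory Defs
  imports "HOL-Analysis.Analysis" "HOL-Library.Liminf_Limsup"
begin

definition LY_pair :: "('a::metric_space \<Rightarrow> 'a) \<Rightarrow> 'a \<Rightarrow> 'a \<Rightarrow> bool" where
  "LY_pair f x y \<longleftrightarrow>
     liminf (\<lambda>n. ereal (dist ((f ^^ n) x) ((f ^^ n) y))) = 0 \<and>
     limsup (\<lambda>n. ereal (dist ((f ^^ n) x) ((f ^^ n) y))) > 0"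

definition LY_delta_pair :: "('a::metric_space \<Rightarrow> 'a) \<Rightarrow> real \<Rightarrow> 'a \<Rightarrow> 'a \<Rightarrow> bool" where
  "LY_delta_pair f \<delta> x y \<longleftrightarrow>
     liminf (\<lambda>n. ereal (dist ((f ^^ n) x) ((f ^^ n) y))) = 0 \<and>
     limsup (\<lambda>n. ereal (dist ((f ^^ n) x) ((f ^^ n) y))) > ereal \<delta>"

definition LY_chaotic :: "('a::metric_space \<Rightarrow> 'a) \<Rightarrow> 'a set \<Rightarrow> bool" where
  "LY_chaotic f C \<longleftrightarrow> (\<forall>x\<in>C. \<forall>y\<in>C. x \<noteq> y \<longrightarrow> LY_pair f x y)"

definition LY_delta_chaotic :: "('a::metric_space \<Rightarrow> 'a) \<Rightarrow> real \<Rightarrow> 'a set \<Rightarrow> bool" where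
  "LY_delta_chaotic f \<delta> C \<longleftrightarrow> (\<forall>x\<in>C. \<forall>y\<in>C. x \<noteq> y \<longrightarrow> LY_delta_pair f \<delta> x y)"

text \<open>Q is a strictly increasing sequence of positive integers m_1 < m_2 < ...,
  represented as Q :: nat \<Rightarrow> nat with m_i = Q i for i \<ge> 1 (Q 0 is unused).\<close>

definition Phi_n :: "('a::metric_space \<Rightarrow> 'a) \<Rightarrow> (nat \<Rightarrow> nat) \<Rightarrow> 'a \<Rightarrow> 'a \<Rightarrow> real \<Rightarrow> nat \<Rightarrow> real" where
  "Phi_n f Q x y t n =
     real (card {i \<in> {1..n}. dist ((f ^^ Q i) x) ((f ^^ Q i) y) \<le> t}) / real n"

definition Phi_lower :: "('a::metric_space \<Rightarrow> 'a) \<Rightarrow> (nat \<Rightarrow> nat) \<Rightarrow> 'a \<Rightarrow> 'a \<Rightarrow> real \<Rightarrow> ereal" where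
  "Phi_lower f Q x y t = liminf (\<lambda>n. ereal (Phi_n f Q x y t n))"

definition Phi_upper :: "('a::metric_space \<Rightarrow> 'a) \<Rightarrow> (nat \<Rightarrow> nat) \<Rightarrow> 'a \<Rightarrow> 'a \<Rightarrow> real \<Rightarrow> ereal" where
  "Phi_upper f Q x y t = limsup (\<lambda>n. ereal (Phi_n f Q x y t n))"

definition distr_pair :: "('a::metric_space \<Rightarrow> 'a) \<Rightarrow> (nat \<Rightarrow> nat) \<Rightarrow> 'a \<Rightarrow> 'a \<Rightarrow> bool" where
  "distr_pair f Q x y \<longleftrightarrow>
     (\<forall>t>0. Phi_upper f Q x y t = 1) \<and> (\<exists>s>0. Phi_lower f Q x y s = 0)"

definition distr_delta_pair :: "('a::metric_space \<Rightarrow> 'a) \<Rightarrow> real \<Rightarrow> (nat \<Rightarrow> nat) \<Rightarrow> 'a \<Rightarrow> 'a \<Rightarrow> bool" where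
  "distr_delta_pair f \<delta> Q x y \<longleftrightarrow>
     (\<forall>t>0. Phi_upper f Q x y t = 1) \<and> Phi_lower f Q x y \<delta> = 0"

definition distr_chaotic :: "('a::metric_space \<Rightarrow> 'a) \<Rightarrow> (nat \<Rightarrow> nat) \<Rightarrow> 'a set \<Rightarrow> bool" where
  "distr_chaotic f Q D \<longleftrightarrow> (\<forall>x\<in>D. \<forall>y\<in>D. x \<noteq> y \<longrightarrow> distr_pair f Q x y)"

definition distr_delta_chaotic :: "('a::metric_space \<Rightarrow> 'a) \<Rightarrow> real \<Rightarrow> (nat \<Rightarrow> nat) \<Rightarrow> 'a set \<Rightarrow> bool" where
  "distr_delta_chaotic f \<delta> Q D \<longleftrightarrow> (\<forall>x\<in>D. \<forall>y\<in>D. x \<noteq> y \<longrightarrow> distr_delta_pair f \<delta> Q x y)"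

definition pos_strict_seq :: "(nat \<Rightarrow> nat) \<Rightarrow> bool" where
  "pos_strict_seq Q \<longleftrightarrow> strict_mono_on {1..} Q \<and> (\<forall>i\<ge>1. Q i > 0)"

end

(*
  The pairs of distinct points of C are countably many, and for each pair p the distance
  sequence D_p along the orbits comes arbitrarily close to 0 infinitely often and exceeds the
  threshold s_p infinitely often. Cut the indices of Q into the factorial blocks (k!, (k+1)!];
  using a pairing function, assign to every pair infinitely many blocks on which all times Q i
  satisfy D_p < 1/(k+1), and infinitely many blocks on which they all satisfy D_p > s_p. Since
  a block makes up the fraction k/(k+1) of {1..(k+1)!}, the frequencies at n = (k+1)! give
  upper density 1 of {D_p \<le> t} and lower density 0 of {D_p \<le> s_p}.
*)
theory Submission
  imports Defs "HOL-Library.Nat_Bijection"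
begin

lemma frequently_less_if_liminf_ereal_less:
  fixes u :: "nat \<Rightarrow> real"
  assumes "liminf (\<lambda>n. ereal (u n)) < ereal e"
  shows "\<exists>\<^sub>F n in sequentially. u n < e"
proof (rule ccontr)
  assume "\<not> (\<exists>\<^sub>F n in sequentially. u n < e)"
  then have "\<forall>\<^sub>F n in sequentially. ereal e \<le> ereal (u n)"
    by (simp add: not_frequently not_less)
  then have "ereal e \<le> liminf (\<lambda>n. ereal (u n))"
    by (rule Liminf_bounded)
  with assms show False
    by simp
qed

lemma frequently_greater_if_less_limsup_ereal:
  fixes u :: "nat \<Rightarrow> real"
  assumes "ereal s < limsup (\<lambda>n. ereal (u n))"
  shows "\<exists>\<^sub>F n in sequentially. s < u n"
proof (rule ccontr)
  assume "\<not> (\<exists>\<^sub>F n in sequentially. s < u n)"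
  then have "\<forall>\<^sub>F n in sequentially. ereal (u n) \<le> ereal s"
    by (simp add: not_frequently not_less)
  then have "limsup (\<lambda>n. ereal (u n)) \<le> ereal s"
    by (rule Limsup_bounded)
  with assms show False
    by simp
qed

lemma limsup_ereal_eq_1I:
  fixes u :: "nat \<Rightarrow> real"
  assumes "\<And>n. u n \<le> 1" and "\<And>r. r < 1 \<Longrightarrow> \<exists>\<^sub>F n in sequentially. r \<le> u n"
  shows "limsup (\<lambda>n. ereal (u n)) = 1"
proof (rule antisym)
  show "limsup (\<lambda>n. ereal (u n)) \<le> 1"
    by (rule Limsup_bounded) (simp add: assms(1))
  show "1 \<le> limsup (\<lambda>n. ereal (u n))"
  proof (rule ccontr)
    assume "\<not> 1 \<le> limsup (\<lambda>n. ereal (u n))"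
    then obtain r where r: "limsup (\<lambda>n. ereal (u n)) < ereal r" "ereal r < 1"
      using ereal_dense2 by (meson not_le)
    have "\<forall>\<^sub>F n in sequentially. u n < r"
      using Limsup_lessD[OF r(1)] by simp
    then have "\<not> (\<exists>\<^sub>F n in sequentially. r \<le> u n)"
      by (simp add: not_frequently not_le)
    with assms(2) r(2) show False
      by simp
  qed
qed

lemma liminf_ereal_eq_0I:
  fixes u :: "nat \<Rightarrow> real"
  assumes "\<And>n. 0 \<le> u n" and "\<And>r. 0 < r \<Longrightarrow> \<exists>\<^sub>F n in sequentially. u n \<le> r"
  shows "liminf (\<lambda>n. ereal (u n)) = 0"
proof (rule antisym)
  show "0 \<le> liminf (\<lambda>n. ereal (u n))"
    by (rule Liminf_bounded) (simp add: assms(1))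
  show "liminf (\<lambda>n. ereal (u n)) \<le> 0"
  proof (rule ccontr)
    assume "\<not> liminf (\<lambda>n. ereal (u n)) \<le> 0"
    then obtain r where r: "0 < ereal r" "ereal r < liminf (\<lambda>n. ereal (u n))"
      using ereal_dense2 by (meson not_le)
    have "\<forall>\<^sub>F n in sequentially. r < u n"
      using less_LiminfD[OF r(2)] by simp
    then have "\<not> (\<exists>\<^sub>F n in sequentially. u n \<le> r)"
      by (simp add: not_frequently not_le)
    with assms(2) r(1) show False
      by simp
  qed
qed

lemma frequently_sequentially_reindex:
  fixes g :: "nat \<Rightarrow> nat"
  assumes "\<And>k. k \<le> g k" and "\<exists>\<^sub>F k in sequentially. P (g k)"
  shows "\<exists>\<^sub>F n in sequentially. P n"
  using assms unfolding frequently_sequentially by (meson order_trans)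

lemma eventually_inverse_Suc_less:
  assumes "0 < e"
  shows "\<forall>\<^sub>F k in sequentially. 1 / (real k + 1) < e"
  using LIMSEQ_inverse_real_of_nat[THEN order_tendstoD(2), OF assms]
  by (simp add: inverse_eq_divide add.commute)

definition partial_density :: "(nat \<Rightarrow> bool) \<Rightarrow> nat \<Rightarrow> real" where
  "partial_density A n = real (card {i \<in> {1..n}. A i}) / real n"

lemma partial_density_nonneg: "0 \<le> partial_density A n"
  by (simp add: partial_density_def)

lemma partial_density_le_1: "partial_density A n \<le> 1"
proof -
  have "card {i \<in> {1..n}. A i} \<le> card {1..n}"
    by (rule card_mono) auto
  then show ?thesis
    by (cases "n = 0") (auto simp: partial_density_def divide_simps)
qed

definition factorial_block :: "nat \<Rightarrow> nat" where
  "factorial_block i = (LEAST k. i \<le> fact (Suc k))"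

lemma factorial_block_eq:
  assumes "i \<in> {fact k<..fact (Suc k)}"
  shows "factorial_block i = k"
  unfolding factorial_block_def
proof (rule Least_equality)
  show "i \<le> fact (Suc k)" using assms by simp
next
  fix k' assume k': "i \<le> fact (Suc k')"
  show "k \<le> k'"
  proof (rule ccontr)
    assume "\<not> k \<le> k'"
    then have "fact (Suc k') \<le> (fact k :: nat)" by (intro fact_mono_nat) simp
    with k' assms show False by simp
  qed
qed

lemma real_fact_Suc: "real (fact (Suc k)) = (real k + 1) * real (fact k)"
  by (simp add: algebra_simps)

lemma partial_density_factorial_block_ge:
  assumes "\<And>i. i \<in> {fact k<..fact (Suc k)} \<Longrightarrow> A i"
  shows "real k / (real k + 1) \<le> partial_density A (fact (Suc k))"
proof -
  have "{fact k<..fact (Suc k)} \<subseteq> {i \<in> {1..fact (Suc k)}. A i}"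
    using assms by (auto simp: Suc_le_eq dest: le_less_trans[OF fact_ge_zero])
  then have "card {fact k<..fact (Suc k) :: nat} \<le> card {i \<in> {1..fact (Suc k)}. A i}"
    by (intro card_mono) auto
  moreover have "card {fact k<..fact (Suc k) :: nat} = k * fact k"
    by simp
  ultimately have "k * fact k \<le> card {i \<in> {1..fact (Suc k)}. A i}"
    by linarith
  then have "real (k * fact k) / real (fact (Suc k)) \<le> partial_density A (fact (Suc k))"
    unfolding partial_density_def by (intro divide_right_mono of_nat_mono) auto
  then show ?thesis
    by (simp add: real_fact_Suc del: fact_Suc of_nat_fact)
qed

lemma partial_density_factorial_block_le:
  assumes "\<And>i. i \<in> {fact k<..fact (Suc k)} \<Longrightarrow> \<not> A i"
  shows "partial_density A (fact (Suc k)) \<le> 1 / (real k + 1)"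
proof -
  have "{i \<in> {1..fact (Suc k)}. A i} \<subseteq> {1..fact k}"
    using assms by (auto simp del: fact_Suc) (meson greaterThanAtMost_iff not_le)
  then have "card {i \<in> {1..fact (Suc k)}. A i} \<le> card {1..fact k :: nat}"
    by (intro card_mono) auto
  then have "partial_density A (fact (Suc k)) \<le> real (fact k) / real (fact (Suc k))"
    unfolding partial_density_def by (intro divide_right_mono of_nat_mono) auto
  then show ?thesis
    by (simp add: real_fact_Suc del: fact_Suc of_nat_fact)
qed

lemma strict_mono_choice:
  assumes "\<And>i. \<exists>\<^sub>F n in sequentially. P i n"
  obtains Q :: "nat \<Rightarrow> nat" where "strict_mono Q" and "\<And>i. P i (Q i)"
proof -
  have "\<exists>Q. \<forall>i. P i (Q i) \<and> Q i < Q (Suc i)"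
  proof (rule dependent_nat_choice)
    show "\<exists>n. P 0 n"
      using assms[of 0] by (rule frequently_ex)
  next
    fix n i
    have "\<exists>\<^sub>F m in sequentially. P (Suc i) m \<and> n < m"
      using assms[of "Suc i"] eventually_gt_at_top[of n] by (rule frequently_eventually_frequently)
    then show "\<exists>m. P (Suc i) m \<and> n < m"
      by (rule frequently_ex)
  qed
  then show ?thesis
    using that strict_monoI_Suc by metis
qed

lemma strict_mono_factorial_blocks:
  assumes "countable T" and "\<And>c k. c \<in> T \<Longrightarrow> \<exists>\<^sub>F n in sequentially. R c k n"
  obtains Q :: "nat \<Rightarrow> nat" where "strict_mono Q"
    and "\<And>c. c \<in> T \<Longrightarrow> \<exists>\<^sub>F k in sequentially. \<forall>i\<in>{fact k<..fact (Suc k)}. R c k (Q i)"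
proof -
  \<comment> \<open>Block k serves task number fst (prod_decode k), so every task recurs on arbitrarily late blocks.\<close>
  define task where "task k = from_nat_into T (fst (prod_decode k))" for k
  define goal where "goal k n \<longleftrightarrow> (task k \<in> T \<longrightarrow> R (task k) k n)" for k n
  have "\<exists>\<^sub>F n in sequentially. goal (factorial_block i) n" for i
    using assms(2) by (cases "task (factorial_block i) \<in> T") (auto simp: goal_def)
  then obtain Q where Q: "strict_mono Q" "\<And>i. goal (factorial_block i) (Q i)"
    using strict_mono_choice[of "\<lambda>i. goal (factorial_block i)"] by blast
  have "\<exists>\<^sub>F k in sequentially. \<forall>i\<in>{fact k<..fact (Suc k)}. R c k (Q i)" if "c \<in> T" for c
    unfolding frequently_sequentially
  proof
    fix K
    obtain j where "from_nat_into T j = c"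
      using subset_range_from_nat_into[OF assms(1)] \<open>c \<in> T\<close> by blast
    then have task: "task (prod_encode (j, K)) = c"
      by (simp add: task_def)
    have "\<forall>i\<in>{fact (prod_encode (j, K))<..fact (Suc (prod_encode (j, K)))}. R c (prod_encode (j, K)) (Q i)"
      using Q(2) factorial_block_eq task \<open>c \<in> T\<close> by (metis goal_def)
    then show "\<exists>k\<ge>K. \<forall>i\<in>{fact k<..fact (Suc k)}. R c k (Q i)"
      using le_prod_encode_2 by blast
  qed
  with Q(1) show ?thesis
    using that by blast
qed

lemma limsup_partial_density_eq_1:
  fixes d :: "nat \<Rightarrow> real"
  assumes close: "\<exists>\<^sub>F k in sequentially. \<forall>i\<in>{fact k<..fact (Suc k)}. d i < 1 / (real k + 1)"
    and "0 < t"
  shows "limsup (\<lambda>n. ereal (partial_density (\<lambda>i. d i \<le> t) n)) = 1"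
proof (rule limsup_ereal_eq_1I[OF partial_density_le_1])
  fix r :: real assume "r < 1"
  have "\<exists>\<^sub>F k in sequentially. (\<forall>i\<in>{fact k<..fact (Suc k)}. d i < 1 / (real k + 1))
      \<and> 1 / (real k + 1) < min t (1 - r)"
    using close eventually_inverse_Suc_less[of "min t (1 - r)"] \<open>0 < t\<close> \<open>r < 1\<close>
    by (intro frequently_eventually_frequently) simp_all
  then have "\<exists>\<^sub>F k in sequentially. r \<le> partial_density (\<lambda>i. d i \<le> t) (fact (Suc k))"
  proof (rule frequently_elim1)
    fix k assume k: "(\<forall>i\<in>{fact k<..fact (Suc k)}. d i < 1 / (real k + 1))
      \<and> 1 / (real k + 1) < min t (1 - r)"
    have "real k / (real k + 1) = 1 - 1 / (real k + 1)"
      by (simp add: field_simps)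
    with k have "r \<le> real k / (real k + 1)"
      by linarith
    also have "\<dots> \<le> partial_density (\<lambda>i. d i \<le> t) (fact (Suc k))"
    proof (rule partial_density_factorial_block_ge)
      fix i :: nat assume "i \<in> {fact k<..fact (Suc k)}"
      with k show "d i \<le> t"
        by (meson less_imp_le less_trans min.strict_boundedE)
    qed
    finally show "r \<le> partial_density (\<lambda>i. d i \<le> t) (fact (Suc k))" .
  qed
  then show "\<exists>\<^sub>F n in sequentially. r \<le> partial_density (\<lambda>i. d i \<le> t) n"
    by (rule frequently_sequentially_reindex[of "\<lambda>k. fact (Suc k)", rotated])
      (metis Suc_leD fact_ge_self)
qed

lemma liminf_partial_density_eq_0:
  fixes d :: "nat \<Rightarrow> real"
  assumes far: "\<exists>\<^sub>F k in sequentially. \<forall>i\<in>{fact k<..fact (Suc k)}. s < d i"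
  shows "liminf (\<lambda>n. ereal (partial_density (\<lambda>i. d i \<le> s) n)) = 0"
proof (rule liminf_ereal_eq_0I[OF partial_density_nonneg])
  fix r :: real assume "0 < r"
  have "\<exists>\<^sub>F k in sequentially. (\<forall>i\<in>{fact k<..fact (Suc k)}. s < d i) \<and> 1 / (real k + 1) < r"
    using far eventually_inverse_Suc_less[OF \<open>0 < r\<close>]
    by (rule frequently_eventually_frequently)
  then have "\<exists>\<^sub>F k in sequentially. partial_density (\<lambda>i. d i \<le> s) (fact (Suc k)) \<le> r"
  proof (rule frequently_elim1)
    fix k assume k: "(\<forall>i\<in>{fact k<..fact (Suc k)}. s < d i) \<and> 1 / (real k + 1) < r"
    then have "partial_density (\<lambda>i. d i \<le> s) (fact (Suc k)) \<le> 1 / (real k + 1)"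
      by (intro partial_density_factorial_block_le) (simp add: not_le)
    with k show "partial_density (\<lambda>i. d i \<le> s) (fact (Suc k)) \<le> r"
      by linarith
  qed
  then show "\<exists>\<^sub>F n in sequentially. partial_density (\<lambda>i. d i \<le> s) n \<le> r"
    by (rule frequently_sequentially_reindex[of "\<lambda>k. fact (Suc k)", rotated])
      (metis Suc_leD fact_ge_self)
qed

lemma scrambling_subsequence:
  fixes D :: "'i \<Rightarrow> nat \<Rightarrow> real" and s :: "'i \<Rightarrow> real"
  assumes "countable I"
    and close: "\<And>p e. p \<in> I \<Longrightarrow> 0 < e \<Longrightarrow> \<exists>\<^sub>F n in sequentially. D p n < e"
    and far: "\<And>p. p \<in> I \<Longrightarrow> \<exists>\<^sub>F n in sequentially. s p < D p n"
  shows "\<exists>Q :: nat \<Rightarrow> nat. strict_mono Q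
    \<and> (\<forall>p\<in>I. \<forall>t>0. limsup (\<lambda>n. ereal (partial_density (\<lambda>i. D p (Q i) \<le> t) n)) = 1)
    \<and> (\<forall>p\<in>I. liminf (\<lambda>n. ereal (partial_density (\<lambda>i. D p (Q i) \<le> s p) n)) = 0)"
proof -
  define R where "R c k n \<longleftrightarrow>
      (if snd c then D (fst c) n < 1 / (real k + 1) else s (fst c) < D (fst c) n)"
    for c :: "'i \<times> bool" and k n
  have "countable (I \<times> (UNIV :: bool set))"
    using assms(1) by (simp add: countable_finite)
  moreover have "\<exists>\<^sub>F n in sequentially. R c k n" if "c \<in> I \<times> UNIV" for c k
    using that close[of "fst c" "1 / (real k + 1)"] far[of "fst c"]
    by (cases "snd c") (auto simp: R_def)
  ultimately obtain Q :: "nat \<Rightarrow> nat" where Q: "strict_mono Q"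
    "\<And>c. c \<in> I \<times> UNIV \<Longrightarrow> \<exists>\<^sub>F k in sequentially. \<forall>i::nat\<in>{fact k<..fact (Suc k)}. R c k (Q i)"
    using strict_mono_factorial_blocks[of "I \<times> UNIV" R] by blast
  have "limsup (\<lambda>n. ereal (partial_density (\<lambda>i. D p (Q i) \<le> t) n)) = 1"
    if "p \<in> I" "0 < t" for p t
    using Q(2)[of "(p, True)"] that by (intro limsup_partial_density_eq_1) (simp_all add: R_def)
  moreover have "liminf (\<lambda>n. ereal (partial_density (\<lambda>i. D p (Q i) \<le> s p) n)) = 0"
    if "p \<in> I" for p
    using Q(2)[of "(p, False)"] that by (intro liminf_partial_density_eq_0) (simp add: R_def)
  ultimately show ?thesis
    using Q(1) by blast
qed

lemma strict_mono_imp_pos_strict_seq: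
  assumes "strict_mono Q"
  shows "pos_strict_seq Q"
  unfolding pos_strict_seq_def
proof (intro conjI allI impI)
  show "strict_mono_on {1..} Q"
    using assms by (simp add: strict_mono_on_def strict_mono_def)
next
  fix i :: nat assume "1 \<le> i"
  then have "Q 0 < Q i"
    using assms by (simp add: strict_mono_less)
  then show "0 < Q i"
    by simp
qed

lemma LY_pair_imp_LY_delta_pair:
  assumes "LY_pair f x y"
  obtains \<delta> where "0 < \<delta>" and "LY_delta_pair f \<delta> x y"
proof -
  have "0 < limsup (\<lambda>n. ereal (dist ((f ^^ n) x) ((f ^^ n) y)))"
    using assms by (simp add: LY_pair_def)
  then obtain \<delta> where "0 < ereal \<delta>" "ereal \<delta> < limsup (\<lambda>n. ereal (dist ((f ^^ n) x) ((f ^^ n) y)))"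
    using ereal_dense2 by blast
  with assms that show ?thesis
    by (simp add: LY_pair_def LY_delta_pair_def)
qed

lemma distr_delta_pair_imp_distr_pair:
  "0 < \<delta> \<Longrightarrow> distr_delta_pair f \<delta> Q x y \<Longrightarrow> distr_pair f Q x y"
  unfolding distr_delta_pair_def distr_pair_def by blast

lemma distributional_subsequence_of_pairs:
  fixes f :: "'a::metric_space \<Rightarrow> 'a" and \<delta> :: "'a \<Rightarrow> 'a \<Rightarrow> real"
  assumes "countable C"
    and LY: "\<And>x y. x \<in> C \<Longrightarrow> y \<in> C \<Longrightarrow> x \<noteq> y \<Longrightarrow> LY_delta_pair f (\<delta> x y) x y"
  shows "\<exists>Q. pos_strict_seq Q \<and> (\<forall>x\<in>C. \<forall>y\<in>C. x \<noteq> y \<longrightarrow> distr_delta_pair f (\<delta> x y) Q x y)"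
proof -
  define I where "I = {(x, y). x \<in> C \<and> y \<in> C \<and> x \<noteq> y}"
  define D where "D p n = dist ((f ^^ n) (fst p)) ((f ^^ n) (snd p))" for p n
  have "countable I"
    unfolding I_def by (rule countable_subset[of _ "C \<times> C"]) (use assms(1) in auto)
  moreover have "\<exists>\<^sub>F n in sequentially. D p n < e" if "p \<in> I" "0 < e" for p e
    using that LY by (intro frequently_less_if_liminf_ereal_less)
      (auto simp: I_def D_def LY_delta_pair_def)
  moreover have "\<exists>\<^sub>F n in sequentially. case_prod \<delta> p < D p n" if "p \<in> I" for p
    using that LY by (intro frequently_greater_if_less_limsup_ereal)
      (auto simp: I_def D_def LY_delta_pair_def)
  ultimately obtain Q :: "nat \<Rightarrow> nat" where Q: "strict_mono Q"
    "\<forall>p\<in>I. \<forall>t>0. limsup (\<lambda>n. ereal (partial_density (\<lambda>i. D p (Q i) \<le> t) n)) = 1"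
    "\<forall>p\<in>I. liminf (\<lambda>n. ereal (partial_density (\<lambda>i. D p (Q i) \<le> case_prod \<delta> p) n)) = 0"
    using scrambling_subsequence[of I D "case_prod \<delta>"] by blast
  have Phi_n: "Phi_n f Q x y t = partial_density (\<lambda>i. D (x, y) (Q i) \<le> t)" for x y t
    by (simp add: fun_eq_iff Phi_n_def partial_density_def D_def)
  have "distr_delta_pair f (\<delta> x y) Q x y" if "x \<in> C" "y \<in> C" "x \<noteq> y" for x y
    using Q(2,3) that
    by (simp add: distr_delta_pair_def Phi_upper_def Phi_lower_def Phi_n I_def)
  with Q(1) show ?thesis
    by (blast intro: strict_mono_imp_pos_strict_seq)
qed

theorem theorem3p3:
  fixes f :: "'a::metric_space \<Rightarrow> 'a" and X C :: "'a set" and \<delta> :: real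
  assumes "compact X" and "continuous_on X f" and "f ` X \<subseteq> X"
    and "\<delta> > 0" and "C \<subseteq> X" and "countable C"
  shows "(LY_chaotic f C \<longrightarrow> (\<exists>Q. pos_strict_seq Q \<and> distr_chaotic f Q C))
       \<and> (LY_delta_chaotic f \<delta> C \<longrightarrow> (\<exists>Q. pos_strict_seq Q \<and> distr_delta_chaotic f \<delta> Q C))"
proof (intro conjI impI)
  assume "LY_chaotic f C"
  then have "\<forall>x\<in>C. \<forall>y\<in>C. x \<noteq> y \<longrightarrow> (\<exists>\<epsilon>>0. LY_delta_pair f \<epsilon> x y)"
    unfolding LY_chaotic_def by (metis LY_pair_imp_LY_delta_pair)
  then obtain \<epsilon> where \<epsilon>: "\<forall>x\<in>C. \<forall>y\<in>C. x \<noteq> y \<longrightarrow> 0 < \<epsilon> x y \<and> LY_delta_pair f (\<epsilon> x y) x y"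
    by metis
  then obtain Q where "pos_strict_seq Q"
    "\<forall>x\<in>C. \<forall>y\<in>C. x \<noteq> y \<longrightarrow> distr_delta_pair f (\<epsilon> x y) Q x y"
    using distributional_subsequence_of_pairs[OF \<open>countable C\<close>, of f \<epsilon>] by blast
  with \<epsilon> show "\<exists>Q. pos_strict_seq Q \<and> distr_chaotic f Q C"
    unfolding distr_chaotic_def by (blast intro: distr_delta_pair_imp_distr_pair)
next
  assume "LY_delta_chaotic f \<delta> C"
  then show "\<exists>Q. pos_strict_seq Q \<and> distr_delta_chaotic f \<delta> Q C"
    using distributional_subsequence_of_pairs[OF \<open>countable C\<close>, of f "\<lambda>_ _. \<delta>"]
    unfolding LY_delta_chaotic_def distr_delta_chaotic_def by blast
qed

end
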